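(* The class $\mathrm{Age}(C_3[I_\omega]^* )$ has the Ramsey property.
   Context: For relational structures $\mathbf A,\mathbf B$ in the same language, $\binom{\mathbf B}{\mathbf A}$ denotes the set of substructures of $\mathbf B$ isomorphic to $\mathbf A$. For $k\ge 1$, $\mathbf C\to(\mathbf B)^{\mathbf A}_k$ means: for every map $c:\binom{\mathbf C}{\mathbf A}\to[k]=\{0,\dots,k-1\}$ there is $\mathbf B'\in\binom{\mathbf C}{\mathbf B}$ such that $c$ is constant on $\binom{\mathbf B'}{\mathbf A}$. A class $\mathcal K$ of finite structures has the Ramsey property if for all $k\ge1$ and all $\mathbf A,\mathbf B\in\mathcal K$ there is $\mathbf C\in\mathcal K$ with $\mathbf C\to(\mathbf B)^{\mathbf A}_k$. The age of a structure is the class of finite structures embeddable in it. $C_3$ is the directed 3-cycle on $[3]=\{0,1,2\}$ with edges $(0,1),(1,2),(2,0)$. Fix a linear order $\prec$ on $\mathbb N$ with $(\mathbb N,\prec)\cong(\mathbb Q,<)$. $C_3[I_\omega]^*$ is the structure with universe $[3]\times\mathbb N$ in the language $\{E,P_0,P_1,P_2,<\}$ where $E((i,a),(j,b))$ iff $(i,j)$ is an edge of $C_3$; $P_i=\{i\}\times\mathbb N$; and $(i,a)<(j,b)$ iff $i<j$, or $i=j$ and $a\prec b$. *)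

theory Defs
  imports Main "HOL.Rat"
begin

text \<open>Structures in the language {E, P0, P1, P2, <}: a universe together with
interpretations of the symbols (only their values on the universe matter).\<close>

record 'a lstr =
  univ :: "'a set"
  relE :: "'a \<Rightarrow> 'a \<Rightarrow> bool"
  relP0 :: "'a \<Rightarrow> bool"
  relP1 :: "'a \<Rightarrow> bool"
  relP2 :: "'a \<Rightarrow> bool"
  relL :: "'a \<Rightarrow> 'a \<Rightarrow> bool"

definition iso_map :: "('a \<Rightarrow> 'b) \<Rightarrow> 'a lstr \<Rightarrow> 'b lstr \<Rightarrow> bool" where
  "iso_map f A B \<longleftrightarrow> bij_betw f (univ A) (univ B) \<and>
     (\<forall>x\<in>univ A. \<forall>y\<in>univ A.
        (relE A x y \<longleftrightarrow> relE B (f x) (f y)) \<and> (relL A x y \<longleftrightarrow> relL B (f x) (f y))) \<and>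
     (\<forall>x\<in>univ A. (relP0 A x \<longleftrightarrow> relP0 B (f x)) \<and> (relP1 A x \<longleftrightarrow> relP1 B (f x))
                 \<and> (relP2 A x \<longleftrightarrow> relP2 B (f x)))"

definition isomorphic :: "'a lstr \<Rightarrow> 'b lstr \<Rightarrow> bool" where
  "isomorphic A B \<longleftrightarrow> (\<exists>f. iso_map f A B)"

definition restr :: "'a lstr \<Rightarrow> 'a set \<Rightarrow> 'a lstr" where
  "restr M S = M\<lparr>univ := S\<rparr>"

definition binom :: "'a lstr \<Rightarrow> 'b lstr \<Rightarrow> 'a set set" where
  "binom C A = {S. S \<subseteq> univ C \<and> isomorphic (restr C S) A}"

definition arrows :: "'a lstr \<Rightarrow> 'b lstr \<Rightarrow> 'c lstr \<Rightarrow> nat \<Rightarrow> bool" where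
  "arrows C B A k \<longleftrightarrow>
     (\<forall>c :: 'a set \<Rightarrow> nat. (\<forall>S\<in>binom C A. c S < k) \<longrightarrow>
        (\<exists>S'\<in>binom C B. \<exists>col. \<forall>T\<in>binom (restr C S') A. c T = col))"

definition embeds :: "'a lstr \<Rightarrow> 'b lstr \<Rightarrow> bool" where
  "embeds A M \<longleftrightarrow> (\<exists>S\<subseteq>univ M. isomorphic (restr M S) A)"

text \<open>The age of M, with finite structures represented on subsets of nat
(every finite structure is isomorphic to one of these).\<close>
definition age :: "'b lstr \<Rightarrow> nat lstr set" where
  "age M = {A. finite (univ A) \<and> embeds A M}"

definition ramsey_property :: "nat lstr set \<Rightarrow> bool" where
  "ramsey_property K \<longleftrightarrow>
     (\<forall>k\<ge>1. \<forall>A\<in>K. \<forall>B\<in>K. \<exists>C\<in>K. arrows C B A k)"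

text \<open>C_3[I_omega]^* with respect to an order prec on nat isomorphic to (Q,<).\<close>
definition C3_edge :: "nat \<Rightarrow> nat \<Rightarrow> bool" where
  "C3_edge i j \<longleftrightarrow> (i, j) \<in> {(0,1), (1,2), (2,0)}"

definition C3_Iomega :: "(nat \<Rightarrow> nat \<Rightarrow> bool) \<Rightarrow> (nat \<times> nat) lstr" where
  "C3_Iomega prec = \<lparr> univ = {0..<3} \<times> UNIV,
     relE = (\<lambda>(i,a) (j,b). C3_edge i j),
     relP0 = (\<lambda>(i,a). i = 0),
     relP1 = (\<lambda>(i,a). i = 1),
     relP2 = (\<lambda>(i,a). i = 2),
     relL = (\<lambda>(i,a) (j,b). i < j \<or> (i = j \<and> prec a b)) \<rparr>"

end

theory Submission
  imports Defs "HOL-Library.Ramsey" "HOL-Library.FuncSet" "HOL-Library.Countable"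
begin

text \<open>
  A finite substructure of \<open>C\<^sub>3[I\<^sub>\<omega>]\<^sup>*\<close> is determined up to isomorphism by the
  numbers of its points in the three parts: the predicates, the edge relation and the order between
  different parts only depend on the parts, and inside a part the order is a finite linear order.
  Hence the copies of a structure with part sizes \<open>a\<^sub>0, a\<^sub>1, a\<^sub>2\<close> inside the
  substructure on \<open>H\<^sub>0 \<union> H\<^sub>1 \<union> H\<^sub>2\<close> are exactly the triples of
  \<open>a\<^sub>i\<close>-subsets of the \<open>H\<^sub>i\<close>, and the Ramsey property becomes the product Ramsey
  theorem for three factors. That theorem follows from Ramsey's theorem by handling one factor at a
  time, colouring a set in the new factor by the whole function it induces on the finitely many
  tuples of the previous factors.
\<close>

section \<open>Product Ramsey theorem\<close>

text \<open>The colour \<open>col\<close> is required to lie in \<open>K\<close> even when \<open>[H]\<^bsup>a\<^esup>\<close> is empty;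
  this is what allows the one-factor statement to be iterated.\<close>

lemma ramsey_finite_colours:
  fixes K :: "'k set" and a b :: nat
  assumes "finite K" "K \<noteq> {}"
  shows "\<exists>N::nat. \<forall>c \<in> [{..<N}]\<^bsup>a\<^esup> \<rightarrow> K. \<exists>H \<in> [{..<N}]\<^bsup>b\<^esup>. \<exists>col \<in> K. \<forall>U \<in> [H]\<^bsup>a\<^esup>. c U = col"
proof -
  obtain e where e: "bij_betw e K {..<card K}"
    using ex_bij_betw_finite_nat[OF assms(1)] by (auto simp: atLeast0LessThan)
  obtain N :: nat where N: "partn_lst {..<N} (replicate (card K) b) a"
    using ramsey_full by blast
  have "\<exists>H \<in> [{..<N}]\<^bsup>b\<^esup>. \<exists>col \<in> K. \<forall>U \<in> [H]\<^bsup>a\<^esup>. c U = col"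
    if c: "c \<in> [{..<N}]\<^bsup>a\<^esup> \<rightarrow> K" for c
  proof -
    have "e \<circ> c \<in> [{..<N}]\<^bsup>a\<^esup> \<rightarrow> {..<length (replicate (card K) b)}"
      using c bij_betwE[OF e] by auto
    then obtain i H where i: "i < card K" and H: "H \<in> [{..<N}]\<^bsup>b\<^esup>" "(e \<circ> c) ` [H]\<^bsup>a\<^esup> \<subseteq> {i}"
      using N by (fastforce simp: partn_lst_def monochromatic_def)
    have "c U = inv_into K e i" if "U \<in> [H]\<^bsup>a\<^esup>" for U
    proof -
      have "U \<in> [{..<N}]\<^bsup>a\<^esup>"
        using H(1) that by (auto simp: nsets_def)
      then show ?thesis
        using H(2) that c e by (force simp: bij_betw_def)
    qed
    moreover have "inv_into K e i \<in> K"
      using e i by (metis bij_betw_def inv_into_into lessThan_iff)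
    ultimately show ?thesis
      using H(1) by blast
  qed
  then show ?thesis by blast
qed

lemma ramsey_uniform_in_parameter:
  fixes K :: "'k set" and Z :: "'z set" and a b :: nat
  assumes "finite K" "K \<noteq> {}" "finite Z"
  shows "\<exists>N::nat. \<forall>c. (\<forall>U \<in> [{..<N}]\<^bsup>a\<^esup>. \<forall>z \<in> Z. c U z \<in> K) \<longrightarrow>
           (\<exists>H \<in> [{..<N}]\<^bsup>b\<^esup>. \<exists>\<phi> \<in> Z \<rightarrow>\<^sub>E K. \<forall>U \<in> [H]\<^bsup>a\<^esup>. \<forall>z \<in> Z. c U z = \<phi> z)"
proof -
  have "finite (Z \<rightarrow>\<^sub>E K)" "Z \<rightarrow>\<^sub>E K \<noteq> {}"
    using assms by (auto simp: finite_PiE PiE_eq_empty_iff)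
  then obtain N :: nat where N: "\<forall>c \<in> [{..<N}]\<^bsup>a\<^esup> \<rightarrow> Z \<rightarrow>\<^sub>E K. \<exists>H \<in> [{..<N}]\<^bsup>b\<^esup>. \<exists>\<phi> \<in> Z \<rightarrow>\<^sub>E K. \<forall>U \<in> [H]\<^bsup>a\<^esup>. c U = \<phi>"
    using ramsey_finite_colours[of "Z \<rightarrow>\<^sub>E K" a b] by blast
  show ?thesis
  proof (intro exI allI impI)
    fix c assume "\<forall>U \<in> [{..<N}]\<^bsup>a\<^esup>. \<forall>z \<in> Z. c U z \<in> K"
    then have "(\<lambda>U. restrict (c U) Z) \<in> [{..<N}]\<^bsup>a\<^esup> \<rightarrow> Z \<rightarrow>\<^sub>E K"
      by auto
    from bspec[OF N this] obtain H \<phi>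
      where "H \<in> [{..<N}]\<^bsup>b\<^esup>" "\<phi> \<in> Z \<rightarrow>\<^sub>E K" "\<forall>U \<in> [H]\<^bsup>a\<^esup>. restrict (c U) Z = \<phi>"
      by blast
    then show "\<exists>H \<in> [{..<N}]\<^bsup>b\<^esup>. \<exists>\<phi> \<in> Z \<rightarrow>\<^sub>E K. \<forall>U \<in> [H]\<^bsup>a\<^esup>. \<forall>z \<in> Z. c U z = \<phi> z"
      by (metis restrict_apply')
  qed
qed

lemma PiE_lessThan_Suc_updI:
  assumes "z \<in> (\<Pi>\<^sub>E i\<in>{..<n}. B i)" "v \<in> A n" "\<And>i. i < n \<Longrightarrow> B i = A i"
  shows "z(n := v) \<in> (\<Pi>\<^sub>E i\<in>{..<Suc n}. A i)"
proof -
  have "(\<Pi>\<^sub>E i\<in>{..<n}. B i) = (\<Pi>\<^sub>E i\<in>{..<n}. A i)"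
    using assms(3) by (intro PiE_cong) simp
  then show ?thesis
    unfolding lessThan_Suc using assms(1,2) by (intro PiE_fun_upd) simp_all
qed

lemma PiE_lessThan_Suc_updD:
  assumes "U \<in> (\<Pi>\<^sub>E i\<in>{..<Suc n}. A i)" "\<And>i. i < n \<Longrightarrow> A i = B i"
  shows "U(n := undefined) \<in> (\<Pi>\<^sub>E i\<in>{..<n}. B i)" "U n \<in> A n"
proof -
  have "U(n := undefined) \<in> (\<Pi>\<^sub>E i\<in>{..<n}. A i)"
    using assms(1) by (intro fun_upd_in_PiE) (auto simp: lessThan_Suc)
  moreover have "(\<Pi>\<^sub>E i\<in>{..<n}. A i) = (\<Pi>\<^sub>E i\<in>{..<n}. B i)"
    using assms(2) by (intro PiE_cong) simp
  ultimately show "U(n := undefined) \<in> (\<Pi>\<^sub>E i\<in>{..<n}. B i)"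
    by simp
  show "U n \<in> A n"
    using assms(1) by (auto dest: PiE_mem)
qed

lemma PiE_nsets_mono:
  assumes "H \<in> (\<Pi>\<^sub>E i\<in>I. [X i]\<^bsup>b i\<^esup>)"
  shows "(\<Pi>\<^sub>E i\<in>I. [H i]\<^bsup>a i\<^esup>) \<subseteq> (\<Pi>\<^sub>E i\<in>I. [X i]\<^bsup>a i\<^esup>)"
proof (rule PiE_mono)
  fix i assume "i \<in> I"
  with assms have "H i \<in> [X i]\<^bsup>b i\<^esup>"
    by (rule PiE_mem)
  then show "[H i]\<^bsup>a i\<^esup> \<subseteq> [X i]\<^bsup>a i\<^esup>"
    by (intro nsets_mono) (simp add: nsets_def)
qed

definition product_partn :: "nat \<Rightarrow> (nat \<Rightarrow> nat) \<Rightarrow> (nat \<Rightarrow> nat) \<Rightarrow> (nat \<Rightarrow> nat) \<Rightarrow> 'k set \<Rightarrow> bool" where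
  "product_partn n N b a K \<longleftrightarrow>
     (\<forall>c. (\<forall>U \<in> \<Pi>\<^sub>E i\<in>{..<n}. [{..<N i}]\<^bsup>a i\<^esup>. c U \<in> K) \<longrightarrow>
       (\<exists>H \<in> \<Pi>\<^sub>E i\<in>{..<n}. [{..<N i}]\<^bsup>b i\<^esup>. \<exists>col. \<forall>U \<in> \<Pi>\<^sub>E i\<in>{..<n}. [H i]\<^bsup>a i\<^esup>. c U = col))"

lemma product_partn_0: "product_partn 0 N b a K"
  unfolding product_partn_def by (simp only: lessThan_0 PiE_empty_domain) simp

lemma product_partn_SucI:
  assumes N: "product_partn n N b a K"
    and M: "\<forall>c. (\<forall>V \<in> [{..<M}]\<^bsup>a n\<^esup>. \<forall>z \<in> Z. c V z \<in> K) \<longrightarrow>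
           (\<exists>G \<in> [{..<M}]\<^bsup>b n\<^esup>. \<exists>\<phi> \<in> Z \<rightarrow>\<^sub>E K. \<forall>V \<in> [G]\<^bsup>a n\<^esup>. \<forall>z \<in> Z. c V z = \<phi> z)"
    and Z: "Z = (\<Pi>\<^sub>E i\<in>{..<n}. [{..<N i}]\<^bsup>a i\<^esup>)"
  shows "product_partn (Suc n) (N(n := M)) b a K"
  unfolding product_partn_def
proof (intro allI impI)
  fix c
  assume c: "\<forall>U \<in> \<Pi>\<^sub>E i\<in>{..<Suc n}. [{..<(N(n := M)) i}]\<^bsup>a i\<^esup>. c U \<in> K"
  have "\<forall>V \<in> [{..<M}]\<^bsup>a n\<^esup>. \<forall>z \<in> Z. c (z(n := V)) \<in> K"
  proof (intro ballI)
    fix V z assume "V \<in> [{..<M}]\<^bsup>a n\<^esup>" "z \<in> Z"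
    then have "z(n := V) \<in> (\<Pi>\<^sub>E i\<in>{..<Suc n}. [{..<(N(n := M)) i}]\<^bsup>a i\<^esup>)"
      unfolding Z by (intro PiE_lessThan_Suc_updI) simp_all
    then show "c (z(n := V)) \<in> K"
      using c by blast
  qed
  then obtain G \<phi> where G: "G \<in> [{..<M}]\<^bsup>b n\<^esup>" and \<phi>: "\<phi> \<in> Z \<rightarrow>\<^sub>E K"
    and c\<phi>: "\<forall>V \<in> [G]\<^bsup>a n\<^esup>. \<forall>z \<in> Z. c (z(n := V)) = \<phi> z"
    using M[THEN spec, of "\<lambda>V z. c (z(n := V))"] by blast
  have "\<forall>z \<in> Z. \<phi> z \<in> K"
    using \<phi> by blast
  then obtain H col where H: "H \<in> (\<Pi>\<^sub>E i\<in>{..<n}. [{..<N i}]\<^bsup>b i\<^esup>)"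
    and \<phi>col: "\<forall>U \<in> \<Pi>\<^sub>E i\<in>{..<n}. [H i]\<^bsup>a i\<^esup>. \<phi> U = col"
    using N[unfolded product_partn_def, THEN spec, of \<phi>] unfolding Z by blast
  have "H(n := G) \<in> (\<Pi>\<^sub>E i\<in>{..<Suc n}. [{..<(N(n := M)) i}]\<^bsup>b i\<^esup>)"
    using H G by (intro PiE_lessThan_Suc_updI) simp_all
  moreover have "c U = col" if U: "U \<in> (\<Pi>\<^sub>E i\<in>{..<Suc n}. [(H(n := G)) i]\<^bsup>a i\<^esup>)" for U
  proof -
    have z: "U(n := undefined) \<in> (\<Pi>\<^sub>E i\<in>{..<n}. [H i]\<^bsup>a i\<^esup>)" and "U n \<in> [G]\<^bsup>a n\<^esup>"
      using PiE_lessThan_Suc_updD[OF U, of "\<lambda>i. [H i]\<^bsup>a i\<^esup>"] by simp_all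
    moreover have "U(n := undefined) \<in> Z"
      using z PiE_nsets_mono[OF H] unfolding Z by blast
    ultimately have "c ((U(n := undefined))(n := U n)) = \<phi> (U(n := undefined))"
      using c\<phi> by blast
    then show ?thesis
      using \<phi>col z by simp
  qed
  ultimately show "\<exists>H \<in> \<Pi>\<^sub>E i\<in>{..<Suc n}. [{..<(N(n := M)) i}]\<^bsup>b i\<^esup>. \<exists>col.
      \<forall>U \<in> \<Pi>\<^sub>E i\<in>{..<Suc n}. [H i]\<^bsup>a i\<^esup>. c U = col"
    by blast
qed

lemma product_partn_Suc:
  assumes "finite K" "K \<noteq> {}" and N: "product_partn n N b a K"
  obtains M where "product_partn (Suc n) (N(n := M)) b a K"
proof -
  define Z where "Z = (\<Pi>\<^sub>E i\<in>{..<n}. [{..<N i}]\<^bsup>a i\<^esup>)"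
  have "finite Z"
    by (simp add: Z_def finite_PiE finite_imp_finite_nsets)
  obtain M :: nat where "\<forall>c. (\<forall>V \<in> [{..<M}]\<^bsup>a n\<^esup>. \<forall>z \<in> Z. c V z \<in> K) \<longrightarrow>
      (\<exists>G \<in> [{..<M}]\<^bsup>b n\<^esup>. \<exists>\<phi> \<in> Z \<rightarrow>\<^sub>E K. \<forall>V \<in> [G]\<^bsup>a n\<^esup>. \<forall>z \<in> Z. c V z = \<phi> z)"
    using ramsey_uniform_in_parameter[OF assms(1,2) \<open>finite Z\<close>, of "a n" "b n"] by blast
  then show thesis
    using that product_partn_SucI[OF N _ Z_def] by blast
qed

theorem ramsey_product:
  assumes "finite K" "K \<noteq> {}"
  shows "\<exists>N. product_partn n N b a K"
proof (induction n)
  case 0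
  show ?case
    using product_partn_0 by blast
next
  case (Suc n)
  then show ?case
    using product_partn_Suc[OF assms] by metis
qed

section \<open>Isomorphism invariance of partition arrows\<close>

lemma restr_simps [simp]:
  "univ (restr M S) = S" "relE (restr M S) = relE M" "relL (restr M S) = relL M"
  "relP0 (restr M S) = relP0 M" "relP1 (restr M S) = relP1 M" "relP2 (restr M S) = relP2 M"
  "restr (restr M S) T = restr M T" "restr M (univ M) = M"
  by (simp_all add: restr_def)

lemma iso_map_inv_into:
  assumes "iso_map f A B"
  shows "iso_map (inv_into (univ A) f) B A"
proof -
  let ?g = "inv_into (univ A) f"
  have f: "bij_betw f (univ A) (univ B)"
    using assms by (simp add: iso_map_def)
  have g: "?g x \<in> univ A" "f (?g x) = x" if "x \<in> univ B" for x
    using f that by (auto simp: bij_betw_def inv_into_into f_inv_into_f)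
  show ?thesis
    unfolding iso_map_def
  proof (intro conjI ballI bij_betw_inv_into[OF f])
    fix x y assume "x \<in> univ B" "y \<in> univ B"
    then show "relE B x y = relE A (?g x) (?g y)" "relL B x y = relL A (?g x) (?g y)"
      using assms g unfolding iso_map_def by metis+
  next
    fix x assume "x \<in> univ B"
    then show "relP0 B x = relP0 A (?g x)" "relP1 B x = relP1 A (?g x)" "relP2 B x = relP2 A (?g x)"
      using assms g unfolding iso_map_def by metis+
  qed
qed

lemma iso_map_comp:
  assumes "iso_map f A B" "iso_map g B C"
  shows "iso_map (g \<circ> f) A C"
proof -
  have "f x \<in> univ B" if "x \<in> univ A" for x
    using assms(1) that by (auto simp: iso_map_def dest: bij_betwE)
  then show ?thesis
    using assms unfolding iso_map_def by (auto intro: bij_betw_trans)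
qed

lemma isomorphic_sym: "isomorphic A B \<Longrightarrow> isomorphic B A"
  unfolding isomorphic_def by (blast intro: iso_map_inv_into)

lemma isomorphic_trans: "isomorphic A B \<Longrightarrow> isomorphic B C \<Longrightarrow> isomorphic A C"
  unfolding isomorphic_def by (blast intro: iso_map_comp)

lemma iso_map_restr:
  assumes "iso_map h C D" "S \<subseteq> univ C"
  shows "iso_map h (restr C S) (restr D (h ` S))"
proof -
  have "bij_betw h S (h ` S)"
    using assms bij_betw_subset unfolding iso_map_def by blast
  then show ?thesis
    using assms unfolding iso_map_def by auto
qed

lemma binom_restr_image:
  assumes h: "iso_map h C D" and S: "S \<subseteq> univ C"
  shows "binom (restr D (h ` S)) A = image h ` binom (restr C S) A"
proof (intro antisym subsetI)
  fix T' assume "T' \<in> binom (restr D (h ` S)) A"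
  then have T': "T' \<subseteq> h ` S" "isomorphic (restr D T') A"
    by (auto simp: binom_def)
  define T where "T = S \<inter> h -` T'"
  have "h ` T = T'" "T \<subseteq> S"
    using T' by (auto simp: T_def)
  moreover have "isomorphic (restr C T) (restr D (h ` T))"
    using iso_map_restr[OF h] S \<open>T \<subseteq> S\<close> by (auto simp: isomorphic_def)
  ultimately show "T' \<in> image h ` binom (restr C S) A"
    using T' by (auto simp: binom_def intro: isomorphic_trans)
next
  fix T' assume "T' \<in> image h ` binom (restr C S) A"
  then obtain T where T: "T \<subseteq> S" "isomorphic (restr C T) A" "T' = h ` T"
    by (auto simp: binom_def)
  moreover have "isomorphic (restr C T) (restr D (h ` T))"
    using iso_map_restr[OF h] S T(1) by (auto simp: isomorphic_def)
  ultimately show "T' \<in> binom (restr D (h ` S)) A"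
    by (auto simp: binom_def intro: isomorphic_trans isomorphic_sym)
qed

lemma arrows_iso_map:
  assumes h: "iso_map h C D" and arrows: "arrows C B A k"
  shows "arrows D B A k"
  unfolding arrows_def
proof (intro allI impI)
  fix c :: "'b set \<Rightarrow> nat"
  assume c: "\<forall>T \<in> binom D A. c T < k"
  have "h ` univ C = univ D"
    using h by (simp add: iso_map_def bij_betw_def)
  then have binom_D: "binom D X = image h ` binom C X" for X :: "'x lstr"
    using binom_restr_image[OF h, of "univ C" X] by simp
  have "\<forall>T \<in> binom C A. c (h ` T) < k"
    using c by (simp add: binom_D)
  then obtain S col where S: "S \<in> binom C B" and col: "\<forall>T \<in> binom (restr C S) A. c (h ` T) = col"
    using arrows[unfolded arrows_def, THEN spec, of "\<lambda>T. c (h ` T)"] by blast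
  have "binom (restr D (h ` S)) A = image h ` binom (restr C S) A"
    using S by (intro binom_restr_image[OF h]) (simp add: binom_def)
  then have "\<forall>T \<in> binom (restr D (h ` S)) A. c T = col"
    using col by simp
  moreover have "h ` S \<in> binom D B"
    using S binom_D[of B] by simp
  ultimately show "\<exists>S' \<in> binom D B. \<exists>col. \<forall>T \<in> binom (restr D S') A. c T = col"
    by blast
qed

lemma binom_isomorphic: "isomorphic A A' \<Longrightarrow> binom C A = binom C A'"
  unfolding binom_def by (blast intro: isomorphic_trans isomorphic_sym)

lemma arrows_isomorphic:
  assumes "isomorphic C C'" "isomorphic A A'" "isomorphic B B'" "arrows C B A k"
  shows "arrows C' B' A' k"
proof -
  have "arrows C' B A k"
    using assms(1,4) arrows_iso_map by (auto simp: isomorphic_def)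
  then show ?thesis
    unfolding arrows_def binom_isomorphic[OF assms(2)] binom_isomorphic[OF assms(3)] .
qed

lemma age_memE:
  assumes "A \<in> age M"
  obtains S where "S \<subseteq> univ M" "finite S" "isomorphic (restr M S) A"
proof -
  obtain S F where S: "S \<subseteq> univ M" and F: "iso_map F (restr M S) A"
    using assms by (auto simp: age_def embeds_def isomorphic_def)
  then have "finite S"
    using assms by (auto simp: age_def iso_map_def bij_betw_finite)
  with S F that show thesis
    by (auto simp: isomorphic_def)
qed

lemma finite_substructure_in_age:
  fixes M :: "'a::countable lstr"
  assumes "S \<subseteq> univ M" "finite S"
  obtains C where "C \<in> age M" "isomorphic C (restr M S)"
proof
  define C where "C = \<lparr>univ = to_nat ` S,
     relE = \<lambda>x y. relE M (from_nat x) (from_nat y), relP0 = \<lambda>x. relP0 M (from_nat x),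
     relP1 = \<lambda>x. relP1 M (from_nat x), relP2 = \<lambda>x. relP2 M (from_nat x),
     relL = \<lambda>x y. relL M (from_nat x) (from_nat y)\<rparr>"
  have "bij_betw from_nat (to_nat ` S) S"
    by (rule bij_betw_byWitness[where f' = to_nat]) auto
  then show iso: "isomorphic C (restr M S)"
    unfolding isomorphic_def iso_map_def C_def by auto
  show "C \<in> age M"
    using assms isomorphic_sym[OF iso] by (auto simp: age_def embeds_def C_def)
qed

section \<open>Finite linear orders\<close>

definition rank :: "('a \<Rightarrow> 'b::linorder) \<Rightarrow> 'a set \<Rightarrow> 'a \<Rightarrow> nat" where
  "rank \<phi> X x = card {z \<in> X. \<phi> z < \<phi> x}"

lemma rank_less_rank:
  assumes "finite X" "x \<in> X" "\<phi> x < \<phi> y"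
  shows "rank \<phi> X x < rank \<phi> X y"
proof -
  have "{z \<in> X. \<phi> z < \<phi> x} \<subset> {z \<in> X. \<phi> z < \<phi> y}"
    using assms by auto
  then show ?thesis
    unfolding rank_def using assms(1) by (simp add: psubset_card_mono)
qed

lemma rank_less_rank_iff:
  assumes "finite X" "inj_on \<phi> X" "x \<in> X" "y \<in> X"
  shows "rank \<phi> X x < rank \<phi> X y \<longleftrightarrow> \<phi> x < \<phi> y"
  using rank_less_rank[OF assms(1,3), of \<phi> y] rank_less_rank[OF assms(1,4), of \<phi> x] assms(2-4)
  by (metis inj_on_eq_iff less_asym neqE)

lemma bij_betw_rank:
  assumes "finite X" "inj_on \<phi> X"
  shows "bij_betw (rank \<phi> X) X {..<card X}"
proof -
  have inj: "inj_on (rank \<phi> X) X"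
  proof (rule inj_onI)
    fix x y assume xy: "x \<in> X" "y \<in> X" "rank \<phi> X x = rank \<phi> X y"
    then have "\<phi> x = \<phi> y"
      using rank_less_rank_iff[OF assms, of x y] rank_less_rank_iff[OF assms, of y x] by auto
    then show "x = y"
      using assms(2) xy by (simp add: inj_on_eq_iff)
  qed
  have "rank \<phi> X x < card X" if "x \<in> X" for x
    unfolding rank_def using assms(1) that by (intro psubset_card_mono) auto
  then have "rank \<phi> X ` X \<subseteq> {..<card X}"
    by auto
  moreover have "card (rank \<phi> X ` X) = card {..<card X}"
    using card_image[OF inj] by simp
  ultimately show ?thesis
    using inj by (simp add: bij_betw_def card_subset_eq)
qed

lemma finite_order_iso:
  fixes \<phi> :: "'a \<Rightarrow> 'b::linorder"
  assumes "finite X" "finite Y" "card X = card Y" "inj_on \<phi> X" "inj_on \<phi> Y"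
  obtains \<sigma> where "bij_betw \<sigma> X Y" "\<And>x y. x \<in> X \<Longrightarrow> y \<in> X \<Longrightarrow> \<phi> (\<sigma> x) < \<phi> (\<sigma> y) \<longleftrightarrow> \<phi> x < \<phi> y"
proof
  let ?\<sigma> = "inv_into Y (rank \<phi> Y) \<circ> rank \<phi> X"
  have X: "bij_betw (rank \<phi> X) X {..<card Y}" and Y: "bij_betw (rank \<phi> Y) Y {..<card Y}"
    using bij_betw_rank assms by metis+
  show \<sigma>: "bij_betw ?\<sigma> X Y"
    using bij_betw_trans[OF X bij_betw_inv_into[OF Y]] .
  have rank_\<sigma>: "rank \<phi> Y (?\<sigma> x) = rank \<phi> X x" if "x \<in> X" for x
  proof -
    have "rank \<phi> X x \<in> rank \<phi> Y ` Y"
      using X Y that by (metis bij_betw_def imageI)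
    then show ?thesis
      by (simp add: f_inv_into_f)
  qed
  fix x y assume "x \<in> X" "y \<in> X"
  moreover have "?\<sigma> x \<in> Y" "?\<sigma> y \<in> Y"
    using \<sigma> \<open>x \<in> X\<close> \<open>y \<in> X\<close> by (auto dest: bij_betwE)
  ultimately show "\<phi> (?\<sigma> x) < \<phi> (?\<sigma> y) \<longleftrightarrow> \<phi> x < \<phi> y"
    using rank_less_rank_iff assms rank_\<sigma> by metis
qed

section \<open>Finite substructures of \<open>C\<^sub>3[I\<^sub>\<omega>]\<^sup>*\<close>\<close>

lemma bij_betw_Sigma:
  assumes "\<And>i. i \<in> I \<Longrightarrow> bij_betw (\<sigma> i) (A i) (B i)"
  shows "bij_betw (\<lambda>(i, x). (i, \<sigma> i x)) (Sigma I A) (Sigma I B)"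
proof (rule bij_betw_byWitness[where f' = "\<lambda>(i, y). (i, inv_into (A i) (\<sigma> i) y)"])
  show "\<forall>p \<in> Sigma I A. (\<lambda>(i, y). (i, inv_into (A i) (\<sigma> i) y)) ((\<lambda>(i, x). (i, \<sigma> i x)) p) = p"
    using assms by (auto simp: bij_betw_def)
  show "\<forall>p \<in> Sigma I B. (\<lambda>(i, x). (i, \<sigma> i x)) ((\<lambda>(i, y). (i, inv_into (A i) (\<sigma> i) y)) p) = p"
    using assms by (auto simp: bij_betw_def f_inv_into_f)
  show "(\<lambda>(i, x). (i, \<sigma> i x)) ` Sigma I A \<subseteq> Sigma I B"
    using assms by (auto dest: bij_betwE)
  show "(\<lambda>(i, y). (i, inv_into (A i) (\<sigma> i) y)) ` Sigma I B \<subseteq> Sigma I A"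
    using assms by (auto simp: bij_betw_def inv_into_into)
qed

lemma bij_betw_Image_singleton:
  assumes F: "bij_betw F S T" and fst_F: "\<And>x. x \<in> S \<Longrightarrow> fst (F x) = fst x"
  shows "bij_betw (\<lambda>n. snd (F (i, n))) (S `` {i}) (T `` {i})"
  unfolding bij_betw_def
proof
  show "inj_on (\<lambda>n. snd (F (i, n))) (S `` {i})"
  proof (rule inj_onI)
    fix n m assume "n \<in> S `` {i}" "m \<in> S `` {i}" "snd (F (i, n)) = snd (F (i, m))"
    then have "F (i, n) = F (i, m)" "(i, n) \<in> S" "(i, m) \<in> S"
      using fst_F by (auto simp: prod_eq_iff)
    then show "n = m"
      using F by (auto simp: bij_betw_def inj_on_def)
  qed
  show "(\<lambda>n. snd (F (i, n))) ` (S `` {i}) = T `` {i}"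
  proof (intro antisym subsetI)
    fix m assume "m \<in> (\<lambda>n. snd (F (i, n))) ` (S `` {i})"
    then obtain n where n: "(i, n) \<in> S" and m: "m = snd (F (i, n))"
      by auto
    have "F (i, n) \<in> T"
      using F n by (auto dest: bij_betwE)
    moreover have "F (i, n) = (i, m)"
      using fst_F[OF n] m by (simp add: prod_eq_iff)
    ultimately show "m \<in> T `` {i}"
      by simp
  next
    fix m assume "m \<in> T `` {i}"
    then obtain x where "x \<in> S" "F x = (i, m)"
      using F by (auto simp: bij_betw_def)
    then show "m \<in> (\<lambda>n. snd (F (i, n))) ` (S `` {i})"
      using fst_F[of x] by (auto simp: image_iff intro!: bexI[of _ "snd x"])
  qed
qed

lemma C3_Iomega_simps:
  "univ (C3_Iomega prec) = {..<3} \<times> UNIV"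
  "relE (C3_Iomega prec) x y \<longleftrightarrow> C3_edge (fst x) (fst y)"
  "relP0 (C3_Iomega prec) x \<longleftrightarrow> fst x = 0"
  "relP1 (C3_Iomega prec) x \<longleftrightarrow> fst x = 1"
  "relP2 (C3_Iomega prec) x \<longleftrightarrow> fst x = 2"
  "relL (C3_Iomega prec) x y \<longleftrightarrow> fst x < fst y \<or> (fst x = fst y \<and> prec (snd x) (snd y))"
  by (cases x; cases y; simp add: C3_Iomega_def atLeast0LessThan)+

lemma fst_iso_map_C3:
  assumes F: "iso_map F (restr (C3_Iomega prec) S) (restr (C3_Iomega prec) T)"
    and S: "S \<subseteq> univ (C3_Iomega prec)" and T: "T \<subseteq> univ (C3_Iomega prec)" and x: "x \<in> S"
  shows "fst (F x) = fst x"
proof -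
  have "F x \<in> T"
    using F x by (auto simp: iso_map_def dest: bij_betwE)
  then have "fst x \<in> {0, 1, 2}" "fst (F x) \<in> {0, 1, 2}"
    using S T x by (auto simp: C3_Iomega_simps)
  moreover have "fst x = 0 \<longleftrightarrow> fst (F x) = 0" "fst x = 1 \<longleftrightarrow> fst (F x) = 1"
    "fst x = 2 \<longleftrightarrow> fst (F x) = 2"
    using F x by (auto simp: iso_map_def C3_Iomega_simps)
  ultimately show ?thesis
    by auto
qed

lemma fibre_cards_if_isomorphic_C3:
  assumes S: "S \<subseteq> univ (C3_Iomega prec)" and T: "T \<subseteq> univ (C3_Iomega prec)"
    and iso: "isomorphic (restr (C3_Iomega prec) S) (restr (C3_Iomega prec) T)"
  shows "card (S `` {i}) = card (T `` {i})"
proof -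
  obtain F where F: "iso_map F (restr (C3_Iomega prec) S) (restr (C3_Iomega prec) T)"
    using iso by (auto simp: isomorphic_def)
  then have "bij_betw F S T"
    by (simp add: iso_map_def)
  then have "bij_betw (\<lambda>n. snd (F (i, n))) (S `` {i}) (T `` {i})"
    using fst_iso_map_C3[OF F S T] by (rule bij_betw_Image_singleton)
  then show ?thesis
    by (rule bij_betw_same_card)
qed

text \<open>Only the injectivity of the order embedding \<open>f\<close> is used below, so the argument works for
  every linear order on \<open>\<nat>\<close>, not just for one of type \<open>\<rat>\<close>.\<close>

context
  fixes prec :: "nat \<Rightarrow> nat \<Rightarrow> bool" and f :: "nat \<Rightarrow> 'b::linorder"
  assumes inj_f: "inj f" and prec_iff: "\<And>a b. prec a b \<longleftrightarrow> f a < f b"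
begin

lemma isomorphic_C3_if_fibre_cards:
  assumes S: "S \<subseteq> univ (C3_Iomega prec)" "finite S" and T: "T \<subseteq> univ (C3_Iomega prec)" "finite T"
    and cards: "\<And>i. i < 3 \<Longrightarrow> card (S `` {i}) = card (T `` {i})"
  shows "isomorphic (restr (C3_Iomega prec) S) (restr (C3_Iomega prec) T)"
proof -
  have "\<exists>\<sigma>. bij_betw \<sigma> (S `` {i}) (T `` {i}) \<and>
          (\<forall>a \<in> S `` {i}. \<forall>b \<in> S `` {i}. f (\<sigma> a) < f (\<sigma> b) \<longleftrightarrow> f a < f b)" if i: "i < 3" for i
  proof -
    have "finite (S `` {i})" "finite (T `` {i})" "inj_on f (S `` {i})" "inj_on f (T `` {i})"
      using S(2) T(2) inj_on_subset[OF inj_f subset_UNIV] by simp_all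
    then obtain \<sigma> where "bij_betw \<sigma> (S `` {i}) (T `` {i})"
      "\<And>a b. a \<in> S `` {i} \<Longrightarrow> b \<in> S `` {i} \<Longrightarrow> f (\<sigma> a) < f (\<sigma> b) \<longleftrightarrow> f a < f b"
      using finite_order_iso[of "S `` {i}" "T `` {i}" f] cards[OF i] by blast
    then show ?thesis
      by blast
  qed
  then obtain \<sigma> where \<sigma>: "\<And>i. i < 3 \<Longrightarrow> bij_betw (\<sigma> i) (S `` {i}) (T `` {i})"
    and mono: "\<And>i a b. i < 3 \<Longrightarrow> a \<in> S `` {i} \<Longrightarrow> b \<in> S `` {i} \<Longrightarrow> f (\<sigma> i a) < f (\<sigma> i b) \<longleftrightarrow> f a < f b"
    by metis
  define F where "F = (\<lambda>(i, n). (i, \<sigma> i n))"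
  have "Sigma {..<3} (\<lambda>i. S `` {i}) = S" "Sigma {..<3} (\<lambda>i. T `` {i}) = T"
    using S(1) T(1) by (auto simp: C3_Iomega_simps)
  moreover have "bij_betw F (Sigma {..<3} (\<lambda>i. S `` {i})) (Sigma {..<3} (\<lambda>i. T `` {i}))"
    unfolding F_def using \<sigma> by (intro bij_betw_Sigma) simp
  ultimately have "bij_betw F S T"
    by simp
  moreover have "fst (F x) = fst x" for x
    by (simp add: F_def split: prod.split)
  moreover have "prec (snd (F x)) (snd (F y)) \<longleftrightarrow> prec (snd x) (snd y)"
    if "x \<in> S" "y \<in> S" "fst x = fst y" for x y
    using that S(1) mono[of "fst x" "snd x" "snd y"]
    by (auto simp: F_def prec_iff C3_Iomega_simps split: prod.split)
  ultimately have "iso_map F (restr (C3_Iomega prec) S) (restr (C3_Iomega prec) T)"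
    unfolding iso_map_def by (auto simp: C3_Iomega_simps)
  then show ?thesis
    by (auto simp: isomorphic_def)
qed

lemma isomorphic_C3_iff:
  assumes "S \<subseteq> univ (C3_Iomega prec)" "finite S" "T \<subseteq> univ (C3_Iomega prec)" "finite T"
  shows "isomorphic (restr (C3_Iomega prec) S) (restr (C3_Iomega prec) T) \<longleftrightarrow>
           (\<forall>i<3. card (S `` {i}) = card (T `` {i}))"
  using isomorphic_C3_if_fibre_cards[OF assms] fibre_cards_if_isomorphic_C3[OF assms(1,3)] by blast

lemma binom_C3_Sigma:
  assumes A: "SA \<subseteq> univ (C3_Iomega prec)" "finite SA" and H: "\<And>i. i < 3 \<Longrightarrow> finite (H i)"
  shows "binom (restr (C3_Iomega prec) (Sigma {..<3} H)) (restr (C3_Iomega prec) SA) =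
           Sigma {..<3} ` (\<Pi>\<^sub>E i\<in>{..<3}. [H i]\<^bsup>card (SA `` {i})\<^esup>)"
proof (intro antisym subsetI)
  fix T assume "T \<in> binom (restr (C3_Iomega prec) (Sigma {..<3} H)) (restr (C3_Iomega prec) SA)"
  then have T: "T \<subseteq> Sigma {..<3} H" "isomorphic (restr (C3_Iomega prec) T) (restr (C3_Iomega prec) SA)"
    by (auto simp: binom_def)
  moreover have "finite T"
    using T(1) H by (meson finite_SigmaI finite_lessThan finite_subset lessThan_iff)
  moreover have "T \<subseteq> univ (C3_Iomega prec)"
    using T(1) by (auto simp: C3_Iomega_simps)
  ultimately have cards: "\<forall>i<3. card (T `` {i}) = card (SA `` {i})"
    using isomorphic_C3_iff A by blast
  define U where "U = restrict (\<lambda>i. T `` {i}) {..<3}"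
  have "T = Sigma {..<3} U"
    using T(1) by (auto simp: U_def)
  moreover have "U \<in> (\<Pi>\<^sub>E i\<in>{..<3}. [H i]\<^bsup>card (SA `` {i})\<^esup>)"
    using T(1) cards H by (auto simp: U_def nsets_def intro: finite_subset)
  ultimately show "T \<in> Sigma {..<3} ` (\<Pi>\<^sub>E i\<in>{..<3}. [H i]\<^bsup>card (SA `` {i})\<^esup>)"
    by blast
next
  fix T assume "T \<in> Sigma {..<3} ` (\<Pi>\<^sub>E i\<in>{..<3}. [H i]\<^bsup>card (SA `` {i})\<^esup>)"
  then obtain U where U: "U \<in> (\<Pi>\<^sub>E i\<in>{..<3}. [H i]\<^bsup>card (SA `` {i})\<^esup>)" and T: "T = Sigma {..<3} U"
    by blast
  have U_i: "U i \<subseteq> H i" "finite (U i)" "card (U i) = card (SA `` {i})" if "i < 3" for i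
    using PiE_mem[OF U, of i] that by (auto simp: nsets_def)
  have fibres: "T `` {i} = U i" if "i < 3" for i
    using T that by auto
  have "T \<subseteq> Sigma {..<3} H" "T \<subseteq> univ (C3_Iomega prec)" "finite T"
    using T U_i by (auto simp: C3_Iomega_simps)
  moreover have "\<forall>i<3. card (T `` {i}) = card (SA `` {i})"
    using fibres U_i by simp
  ultimately show "T \<in> binom (restr (C3_Iomega prec) (Sigma {..<3} H)) (restr (C3_Iomega prec) SA)"
    using isomorphic_C3_iff A by (auto simp: binom_def)
qed

lemma arrows_C3_SigmaI:
  assumes A: "SA \<subseteq> univ (C3_Iomega prec)" "finite SA" and B: "SB \<subseteq> univ (C3_Iomega prec)" "finite SB"
    and product: "product_partn 3 N (\<lambda>i. card (SB `` {i})) (\<lambda>i. card (SA `` {i})) {..<k}"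
  shows "arrows (restr (C3_Iomega prec) (SIGMA i:{..<3}. {..<N i}))
                (restr (C3_Iomega prec) SB) (restr (C3_Iomega prec) SA) k"
  unfolding arrows_def
proof (intro allI impI)
  fix c :: "(nat \<times> nat) set \<Rightarrow> nat"
  assume "\<forall>T \<in> binom (restr (C3_Iomega prec) (SIGMA i:{..<3}. {..<N i})) (restr (C3_Iomega prec) SA). c T < k"
  then have "\<forall>U \<in> \<Pi>\<^sub>E i\<in>{..<3}. [{..<N i}]\<^bsup>card (SA `` {i})\<^esup>. c (Sigma {..<3} U) \<in> {..<k}"
    using binom_C3_Sigma[OF A finite_lessThan] by simp
  then obtain H col where H: "H \<in> (\<Pi>\<^sub>E i\<in>{..<3}. [{..<N i}]\<^bsup>card (SB `` {i})\<^esup>)"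
    and col: "\<forall>U \<in> \<Pi>\<^sub>E i\<in>{..<3}. [H i]\<^bsup>card (SA `` {i})\<^esup>. c (Sigma {..<3} U) = col"
    using product[unfolded product_partn_def, THEN spec, of "\<lambda>U. c (Sigma {..<3} U)"] by blast
  have H_finite: "finite (H i)" if "i < 3" for i
    using PiE_mem[OF H, of i] that by (auto simp: nsets_def)
  have "binom (restr (C3_Iomega prec) (Sigma {..<3} H)) (restr (C3_Iomega prec) SA) =
      Sigma {..<3} ` (\<Pi>\<^sub>E i\<in>{..<3}. [H i]\<^bsup>card (SA `` {i})\<^esup>)"
    using A H_finite by (rule binom_C3_Sigma)
  then have homogeneous: "\<forall>T \<in> binom (restr (restr (C3_Iomega prec) (SIGMA i:{..<3}. {..<N i})) (Sigma {..<3} H))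
      (restr (C3_Iomega prec) SA). c T = col"
    using col by simp
  have "Sigma {..<3} H \<in> binom (restr (C3_Iomega prec) (SIGMA i:{..<3}. {..<N i})) (restr (C3_Iomega prec) SB)"
    using H binom_C3_Sigma[OF B finite_lessThan] by simp
  with homogeneous show "\<exists>S' \<in> binom (restr (C3_Iomega prec) (SIGMA i:{..<3}. {..<N i})) (restr (C3_Iomega prec) SB).
      \<exists>col. \<forall>T \<in> binom (restr (restr (C3_Iomega prec) (SIGMA i:{..<3}. {..<N i})) S') (restr (C3_Iomega prec) SA).
        c T = col"
    by blast
qed

lemma arrows_C3_Sigma:
  assumes A: "SA \<subseteq> univ (C3_Iomega prec)" "finite SA" and B: "SB \<subseteq> univ (C3_Iomega prec)" "finite SB"
    and "k \<ge> 1"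
  obtains N where "arrows (restr (C3_Iomega prec) (SIGMA i:{..<3}. {..<N i}))
                          (restr (C3_Iomega prec) SB) (restr (C3_Iomega prec) SA) k"
proof -
  have "0 \<in> {..<k}"
    using \<open>k \<ge> 1\<close> by simp
  then have "{..<k} \<noteq> {}"
    by blast
  then obtain N where "product_partn 3 N (\<lambda>i. card (SB `` {i})) (\<lambda>i. card (SA `` {i})) {..<k}"
    using ramsey_product[OF finite_lessThan] by blast
  then show thesis
    using that arrows_C3_SigmaI[OF A B] by blast
qed

end

theorem theorem5p5:
  fixes prec :: "nat \<Rightarrow> nat \<Rightarrow> bool"
  assumes "\<exists>f :: nat \<Rightarrow> rat. bij f \<and> (\<forall>a b. prec a b \<longleftrightarrow> f a < f b)"
  shows "ramsey_property (age (C3_Iomega prec))"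
  unfolding ramsey_property_def
proof (intro allI impI ballI)
  fix k :: nat and A B
  assume k: "1 \<le> k" and A: "A \<in> age (C3_Iomega prec)" and B: "B \<in> age (C3_Iomega prec)"
  obtain f :: "nat \<Rightarrow> rat" where f: "inj f" "\<And>a b. prec a b \<longleftrightarrow> f a < f b"
    using assms bij_is_inj by blast
  obtain SA where SA: "SA \<subseteq> univ (C3_Iomega prec)" "finite SA" "isomorphic (restr (C3_Iomega prec) SA) A"
    using A by (rule age_memE)
  obtain SB where SB: "SB \<subseteq> univ (C3_Iomega prec)" "finite SB" "isomorphic (restr (C3_Iomega prec) SB) B"
    using B by (rule age_memE)
  obtain N where N: "arrows (restr (C3_Iomega prec) (SIGMA i:{..<3}. {..<N i}))
                        (restr (C3_Iomega prec) SB) (restr (C3_Iomega prec) SA) k"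
    using arrows_C3_Sigma[OF f SA(1,2) SB(1,2) k] .
  have "(SIGMA i:{..<3}. {..<N i}) \<subseteq> univ (C3_Iomega prec)" "finite (SIGMA i:{..<3}. {..<N i})"
    by (auto simp: C3_Iomega_simps)
  then obtain C where C: "C \<in> age (C3_Iomega prec)"
    "isomorphic C (restr (C3_Iomega prec) (SIGMA i:{..<3}. {..<N i}))"
    by (rule finite_substructure_in_age)
  have "arrows C B A k"
    using arrows_isomorphic[OF isomorphic_sym[OF C(2)] SA(3) SB(3) N] .
  with C(1) show "\<exists>C \<in> age (C3_Iomega prec). arrows C B A k"
    by blast
qed

end
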